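(* Let $C$ be a differentiable convex curve in $\mathbb{R}^2$, and let $\alpha\colon I\to C$ be a differentiable curve moving in the counterclockwise direction about $C$. Let $L(t)=\{\alpha(t)+s\,n(\alpha(t)) : s\in\mathbb{R}\}$ be the line through $\alpha(t)$ and $x_\alpha(t)$. Suppose $\beta(t)=\alpha(t)+s(t)\,n(\alpha(t))$ is any differentiable curve (not necessarily in $C$) with $\beta(t)\in L(t)\setminus\{x_\alpha(t)\}$ for all $t\in I$. Then $(\beta'(t),n(\alpha(t)))$ is a positive basis of $\mathbb{R}^2$ if and only if $\beta(t)$ lies in the same connected component of $L(t)\setminus\{x_\alpha(t)\}$ as $\alpha(t)$.
   Context: $I=[0,1]$. For a differentiable curve $\alpha$: unit tangent $T=\alpha'/\|\alpha'\|$, inner unit normal $n(\alpha(t))=T'/\|T'\|$, curvature $\kappa(t)=\|T'(t)\|/\|\alpha'(t)\|$, center of curvature $x_\alpha(t)=\alpha(t)+\frac{1}{\kappa(t)}n(\alpha(t))$. A basis $(v,w)$ of $\mathbb{R}^2$ is positive if $\det(v,w)>0$. *)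

theory Defs
  imports "HOL-Analysis.Analysis"
begin

text \<open>The parameter interval is I = [0,1]; derivatives are taken within I
  (one-sided at the endpoints).\<close>

definition vd :: "(real \<Rightarrow> 'a::real_normed_vector) \<Rightarrow> real \<Rightarrow> 'a" where
  "vd f t = vector_derivative f (at t within {0..1})"

definition tang :: "(real \<Rightarrow> real^2) \<Rightarrow> real \<Rightarrow> real^2" where
  "tang \<alpha> t = (1 / norm (vd \<alpha> t)) *\<^sub>R vd \<alpha> t"

definition inner_normal :: "(real \<Rightarrow> real^2) \<Rightarrow> real \<Rightarrow> real^2" where
  "inner_normal \<alpha> t = (1 / norm (vd (tang \<alpha>) t)) *\<^sub>R vd (tang \<alpha>) t"

definition curvature :: "(real \<Rightarrow> real^2) \<Rightarrow> real \<Rightarrow> real" where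
  "curvature \<alpha> t = norm (vd (tang \<alpha>) t) / norm (vd \<alpha> t)"

definition curv_center :: "(real \<Rightarrow> real^2) \<Rightarrow> real \<Rightarrow> real^2" where
  "curv_center \<alpha> t = \<alpha> t + (1 / curvature \<alpha> t) *\<^sub>R inner_normal \<alpha> t"

definition normal_line :: "(real \<Rightarrow> real^2) \<Rightarrow> real \<Rightarrow> (real^2) set" where
  "normal_line \<alpha> t = {\<alpha> t + s *\<^sub>R inner_normal \<alpha> t | s. True}"

definition pos_basis :: "real^2 \<Rightarrow> real^2 \<Rightarrow> bool" where
  "pos_basis v w \<longleftrightarrow> det ((\<chi> i j. if j = 1 then v $ i else w $ i) :: real^2^2) > 0"

text \<open>alpha moves counterclockwise about the convex curve frontier K at time t:
  the enclosed region lies strictly to the left of the velocity vector.\<close>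
definition counterclockwise_at :: "(real^2) set \<Rightarrow> (real \<Rightarrow> real^2) \<Rightarrow> real \<Rightarrow> bool" where
  "counterclockwise_at K \<alpha> t \<longleftrightarrow> (\<forall>y \<in> interior K. pos_basis (vd \<alpha> t) (y - \<alpha> t))"

end

(*
  Let T be the unit tangent, N = n(alpha(t)) and beta(t) = alpha(t) + s N. Differentiating the
  constraint <beta - alpha, T> = 0 gives <beta', T> = |alpha'| (1 - s kappa). If N is the left
  normal rot90 T, then det(beta', N) = <beta', T>, so (beta', N) is positive iff s < 1/kappa,
  and this half of the line is exactly the component of alpha(t) (where s = 0) in
  L(t) minus the centre alpha(t) + (1/kappa) N.

  That N = rot90 T is where convexity and the orientation enter: the curve lies in the closed
  half-plane to the left of each of its tangent lines, so v |-> det(alpha'(t), alpha(v) - alpha(t))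
  is minimal at v = t, and the second-derivative test gives det(alpha', alpha'') >= 0, i.e. T'
  points to the left.
*)
theory Submission
  imports Defs
begin

definition cross2 :: "real^2 \<Rightarrow> real^2 \<Rightarrow> real" where
  "cross2 v w = v$1 * w$2 - v$2 * w$1"

definition rot90 :: "real^2 \<Rightarrow> real^2" where
  "rot90 v = (\<chi> i. if i = 1 then - v$2 else v$1)"

lemma rot90_nth [simp]: "rot90 v $ 1 = - v$2" "rot90 v $ 2 = v$1"
  by (simp_all add: rot90_def)

lemma inner_real2: "v \<bullet> w = v$1 * w$1 + v$2 * w$2" for v w :: "real^2"
  by (simp add: inner_vec_def sum_2)

lemma pos_basis_iff_cross2: "pos_basis v w \<longleftrightarrow> 0 < cross2 v w"
  unfolding pos_basis_def det_2 cross2_def by (simp add: mult.commute)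

lemma cross2_rot90: "cross2 v (rot90 w) = v \<bullet> w"
  by (simp add: cross2_def inner_real2)

lemma norm_rot90 [simp]: "norm (rot90 v) = norm v"
  by (simp add: norm_eq_sqrt_inner inner_real2 algebra_simps)

lemma cross2_self [simp]: "cross2 v v = 0"
  by (simp add: cross2_def)

lemma cross2_scaleR [simp]: "cross2 (c *\<^sub>R v) w = c * cross2 v w" "cross2 v (c *\<^sub>R w) = c * cross2 v w"
  by (simp_all add: cross2_def algebra_simps)

lemma bounded_bilinear_cross2: "bounded_bilinear cross2"
proof (rule bounded_bilinear.intro)
  show "\<exists>K. \<forall>v w. norm (cross2 v w) \<le> norm v * norm w * K"
  proof (intro exI allI)
    fix v w :: "real^2"
    have "\<bar>v$i * w$j\<bar> \<le> norm v * norm w" for i j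
      unfolding abs_mult by (intro mult_mono' component_le_norm_cart) auto
    from this[of 1 2] this[of 2 1]
    show "norm (cross2 v w) \<le> norm v * norm w * 2"
      unfolding cross2_def by simp
  qed
qed (simp_all add: cross2_def algebra_simps)

lemma unit_frame_decomposition:
  assumes "norm T = 1"
  shows "v = (v \<bullet> T) *\<^sub>R T + cross2 T v *\<^sub>R rot90 T"
proof -
  have "T \<bullet> T = 1"
    using assms by (simp add: dot_square_norm)
  then have unit: "T$1 * T$1 + T$2 * T$2 = 1"
    by (simp add: inner_real2)
  have "(v \<bullet> T) * T$1 - cross2 T v * T$2 = v$1 * (T$1 * T$1 + T$2 * T$2)"
       "(v \<bullet> T) * T$2 + cross2 T v * T$1 = v$2 * (T$1 * T$1 + T$2 * T$2)"
    by (simp_all add: inner_real2 cross2_def algebra_simps)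
  with unit show ?thesis
    unfolding vec_eq_iff forall_2 by simp
qed

lemma normalized_eq_rot90:
  assumes "norm T = 1" "T \<bullet> w = 0" "0 \<le> cross2 T w" "w \<noteq> 0"
  shows "(1 / norm w) *\<^sub>R w = rot90 T"
proof -
  define c where "c = cross2 T w"
  have "0 \<le> c"
    using assms(3) by (simp add: c_def)
  have w: "w = c *\<^sub>R rot90 T"
    using unit_frame_decomposition[OF assms(1), of w] assms(2) by (simp add: inner_commute c_def)
  then have "norm w = c"
    using \<open>0 \<le> c\<close> assms(1) by simp
  moreover have "c \<noteq> 0"
    using w assms(4) by auto
  ultimately show ?thesis
    using w by simp
qed

lemma second_derivative_nonneg_at_minimum:
  fixes k k' :: "real \<Rightarrow> real"
  assumes "a < b" "t \<in> {a..b}"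
    and k: "\<And>v. v \<in> {a..b} \<Longrightarrow> (k has_real_derivative k' v) (at v within {a..b})"
    and k': "(k' has_real_derivative d) (at t within {a..b})" "k' t = 0"
    and min: "\<And>v. v \<in> {a..b} \<Longrightarrow> k t \<le> k v"
  shows "0 \<le> d"
proof (rule ccontr)
  assume "\<not> 0 \<le> d"
  have "((\<lambda>y. k' y / (y - t)) \<longlongrightarrow> d) (at t within {a..b})"
    using k' by (simp add: has_field_derivative_iff)
  then have "eventually (\<lambda>y. k' y / (y - t) < 0) (at t within {a..b})"
    using \<open>\<not> 0 \<le> d\<close> by (intro order_tendstoD) auto
  then obtain \<delta> where "\<delta> > 0"
    and \<delta>: "\<And>y. y \<in> {a..b} \<Longrightarrow> y \<noteq> t \<Longrightarrow> dist y t < \<delta> \<Longrightarrow> k' y / (y - t) < 0"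
    by (auto simp: eventually_at)
  \<comment> \<open>Near t, k' is positive to the left of t and negative to the right, so t is a strict
    local maximum of k; the mean value theorem makes this quantitative.\<close>
  have "k y < k t" if y: "y \<in> {a..b}" "y \<noteq> t" "dist y t < \<delta>" for y
  proof -
    define lo hi where "lo = min y t" and "hi = max y t"
    have sub: "{lo..hi} \<subseteq> {a..b}" "lo < hi"
      using y assms(2) by (auto simp: lo_def hi_def)
    have "\<exists>\<xi>\<in>{lo<..<hi}. k hi - k lo = k' \<xi> * (hi - lo)"
    proof (rule mvt_simple[OF \<open>lo < hi\<close>, of k "\<lambda>x. (*) (k' x)"])
      show "(k has_derivative (*) (k' x)) (at x within {lo..hi})" if "lo \<le> x" "x \<le> hi" for x
        using k[of x] sub that by (auto simp: has_field_derivative_def intro: has_derivative_subset)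
    qed
    then obtain \<xi> where \<xi>: "\<xi> \<in> {lo<..<hi}" "k hi - k lo = k' \<xi> * (hi - lo)" ..
    have "k y - k t = k' \<xi> * (y - t)"
      using \<xi>(2) by (cases "y < t") (auto simp: lo_def hi_def algebra_simps)
    also have "\<dots> = (k' \<xi> / (\<xi> - t)) * ((\<xi> - t) * (y - t))"
      using \<xi>(1) by (auto simp: lo_def hi_def)
    also have "\<dots> < 0"
    proof (rule mult_neg_pos)
      show "k' \<xi> / (\<xi> - t) < 0"
        using \<xi>(1) sub y by (intro \<delta>) (auto simp: lo_def hi_def dist_real_def)
      show "0 < (\<xi> - t) * (y - t)"
        using \<xi>(1) by (cases "y < t") (auto simp: lo_def hi_def mult_neg_neg)
    qed
    finally show ?thesis by simp
  qed
  moreover obtain y where "y \<in> {a..b}" "y \<noteq> t" "dist y t < \<delta>"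
    using \<open>\<delta> > 0\<close> assms(1,2) islimpt_Icc[OF assms(1)] islimpt_approachable by blast
  ultimately show False
    using min by fastforce
qed

lemma cross2_velocity_acceleration_nonneg:
  fixes \<gamma> \<gamma>' :: "real \<Rightarrow> real^2"
  assumes "a < b" "t \<in> {a..b}"
    and \<gamma>: "\<And>v. v \<in> {a..b} \<Longrightarrow> (\<gamma> has_vector_derivative \<gamma>' v) (at v within {a..b})"
    and \<gamma>': "(\<gamma>' has_vector_derivative \<gamma>'') (at t within {a..b})"
    and left: "\<And>v. v \<in> {a..b} \<Longrightarrow> 0 \<le> cross2 (\<gamma>' t) (\<gamma> v - \<gamma> t)"
  shows "0 \<le> cross2 (\<gamma>' t) \<gamma>''"
proof -
  have lin: "bounded_linear (cross2 (\<gamma>' t))"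
    by (rule bounded_bilinear.bounded_linear_right[OF bounded_bilinear_cross2])
  show ?thesis
  proof (rule second_derivative_nonneg_at_minimum[OF assms(1,2)])
    show "((\<lambda>v. cross2 (\<gamma>' t) (\<gamma> v - \<gamma> t)) has_real_derivative cross2 (\<gamma>' t) (\<gamma>' v))
        (at v within {a..b})" if "v \<in> {a..b}" for v
      using bounded_linear.has_vector_derivative[OF lin
          has_vector_derivative_diff[OF \<gamma>[OF that] has_vector_derivative_const]]
      by (simp add: has_real_derivative_iff_has_vector_derivative)
    show "((\<lambda>v. cross2 (\<gamma>' t) (\<gamma>' v)) has_real_derivative cross2 (\<gamma>' t) \<gamma>'') (at t within {a..b})"
      using bounded_linear.has_vector_derivative[OF lin \<gamma>']
      by (simp add: has_real_derivative_iff_has_vector_derivative)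
  qed (use left in \<open>auto simp: cross2_def\<close>)
qed

lemma has_vector_derivative_zero_if_constant:
  fixes g :: "real \<Rightarrow> 'a::euclidean_space"
  assumes "a < b" "t \<in> {a..b}" "\<And>x. x \<in> {a..b} \<Longrightarrow> g x = c"
    and "(g has_vector_derivative d) (at t within {a..b})"
  shows "d = 0"
proof -
  have "((\<lambda>x. c) has_vector_derivative d) (at t within {a..b})"
    by (rule has_vector_derivative_transform[OF assms(2) _ assms(4)]) (simp add: assms(3))
  from vector_derivative_within_closed_interval[OF assms(1,2) this]
    vector_derivative_within_closed_interval[OF assms(1,2) has_vector_derivative_const[of c]]
  show ?thesis
    by simp
qed

lemma unit_curve_derivative_orthogonal:
  fixes T :: "real \<Rightarrow> 'a::euclidean_space"
  assumes "a < b" "t \<in> {a..b}" "\<And>u. u \<in> {a..b} \<Longrightarrow> norm (T u) = 1"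
    and T': "(T has_vector_derivative T') (at t within {a..b})"
  shows "T t \<bullet> T' = 0"
proof -
  have "((\<lambda>u. T u \<bullet> T u) has_vector_derivative T t \<bullet> T' + T' \<bullet> T t) (at t within {a..b})"
    by (rule bounded_bilinear.has_vector_derivative[OF bounded_bilinear_inner T' T'])
  then have "T t \<bullet> T' + T' \<bullet> T t = 0"
    by (rule has_vector_derivative_zero_if_constant[OF assms(1,2), where c = 1, rotated])
      (simp add: assms(3) dot_square_norm)
  then show ?thesis
    by (simp add: inner_commute)
qed

lemma derivative_of_orthogonality:
  fixes x T :: "real \<Rightarrow> 'a::euclidean_space"
  assumes "a < b" "t \<in> {a..b}" "\<And>u. u \<in> {a..b} \<Longrightarrow> x u \<bullet> T u = 0"
    and x': "(x has_vector_derivative x') (at t within {a..b})"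
    and T': "(T has_vector_derivative T') (at t within {a..b})"
  shows "x' \<bullet> T t = - (x t \<bullet> T')"
proof -
  have "((\<lambda>u. x u \<bullet> T u) has_vector_derivative x t \<bullet> T' + x' \<bullet> T t) (at t within {a..b})"
    by (rule bounded_bilinear.has_vector_derivative[OF bounded_bilinear_inner x' T'])
  then have "x t \<bullet> T' + x' \<bullet> T t = 0"
    by (rule has_vector_derivative_zero_if_constant[OF assms(1,2), where c = 0, rotated])
      (simp add: assms(3))
  then show ?thesis
    by simp
qed

lemma has_vector_derivative_normalized:
  fixes \<gamma> :: "real \<Rightarrow> 'a::real_inner"
  assumes \<gamma>': "(\<gamma> has_vector_derivative \<gamma>') (at t within S)" and "\<gamma> t \<noteq> 0"
  obtains c where "((\<lambda>u. (1 / norm (\<gamma> u)) *\<^sub>R \<gamma> u) has_vector_derivative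
      (1 / norm (\<gamma> t)) *\<^sub>R \<gamma>' + c *\<^sub>R \<gamma> t) (at t within S)"
proof -
  have "(\<lambda>u. norm (\<gamma> u)) differentiable (at t within S)"
    by (rule differentiable_compose[OF differentiable_norm_at[OF \<open>\<gamma> t \<noteq> 0\<close>] differentiableI_vector[OF \<gamma>']])
  then have "(\<lambda>u. 1 / norm (\<gamma> u)) differentiable (at t within S)"
    using \<open>\<gamma> t \<noteq> 0\<close> by simp
  then obtain c where "((\<lambda>u. 1 / norm (\<gamma> u)) has_real_derivative c) (at t within S)"
    by (auto simp: real_differentiable_def)
  from has_vector_derivative_scaleR[OF this \<gamma>'] that show ?thesis
    by blast
qed

lemma connected_component_line_minus_point:
  fixes p N :: "'a::real_inner"
  assumes "N \<noteq> 0" "s\<^sub>0 < r"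
  shows "p + s *\<^sub>R N \<in> connected_component_set ({p + x *\<^sub>R N | x. True} - {p + r *\<^sub>R N}) (p + s\<^sub>0 *\<^sub>R N)
    \<longleftrightarrow> s < r"
proof -
  define l where "l x = p + x *\<^sub>R N" for x
  define S where "S = range l - {l r}"
  define h where "h y = ((y - p) \<bullet> N) / (N \<bullet> N)" for y
  have h_l [simp]: "h (l x) = x" for x
    using assms(1) by (simp add: h_def l_def)
  have S_eq: "{p + x *\<^sub>R N | x. True} - {p + r *\<^sub>R N} = S"
    by (auto simp: S_def l_def)
  have "l s \<in> connected_component_set S (l s\<^sub>0) \<longleftrightarrow> s < r"
  proof
    assume "s < r"
    have "connected (l ` {..<r})"
      unfolding l_def by (intro connected_continuous_image continuous_intros connected_Iio)
    moreover have "l ` {..<r} \<subseteq> S"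
      by (auto simp: S_def) (metis h_l order.irrefl)
    ultimately show "l s \<in> connected_component_set S (l s\<^sub>0)"
      using connected_component_maximal[of "l s\<^sub>0" "l ` {..<r}" S] \<open>s < r\<close> assms(2) by auto
  next
    assume l_s: "l s \<in> connected_component_set S (l s\<^sub>0)"
    define C where "C = connected_component_set S (l s\<^sub>0)"
    have "connected (h ` C)"
      unfolding C_def h_def using assms(1)
      by (intro connected_continuous_image connected_connected_component continuous_intros) simp
    moreover have "l s\<^sub>0 \<in> C" "l s \<in> C"
      using l_s connected_component_in[of S "l s\<^sub>0" "l s"] by (auto simp: C_def)
    ultimately have "{s\<^sub>0..s} \<subseteq> h ` C"
      by (metis connected_contains_Icc h_l imageI)
    show "s < r"
    proof (rule ccontr)
      assume "\<not> s < r"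
      then have "r \<in> h ` C"
        using \<open>{s\<^sub>0..s} \<subseteq> h ` C\<close> assms(2) by auto
      then obtain y where "y \<in> C" "h y = r"
        by blast
      moreover have "C \<subseteq> S"
        by (simp add: C_def connected_component_subset)
      ultimately show False
        by (auto simp: S_def)
    qed
  qed
  then show ?thesis
    by (simp only: S_eq l_def)
qed

lemma has_vector_derivative_vd:
  "f differentiable (at t within {0..1}) \<Longrightarrow> (f has_vector_derivative vd f t) (at t within {0..1})"
  by (simp add: vd_def vector_derivative_works)

lemma vd_eqI:
  fixes f :: "real \<Rightarrow> 'a::euclidean_space"
  shows "t \<in> {0..1} \<Longrightarrow> (f has_vector_derivative f') (at t within {0..1}) \<Longrightarrow> vd f t = f'"
  unfolding vd_def by (rule vector_derivative_within_closed_interval) auto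

lemma norm_tang: "vd \<alpha> t \<noteq> 0 \<Longrightarrow> norm (tang \<alpha> t) = 1"
  by (simp add: tang_def)

lemma vd_tang:
  assumes "t \<in> {0..1}" "vd \<alpha> differentiable (at t within {0..1})" "vd \<alpha> t \<noteq> 0"
  obtains c where "(tang \<alpha> has_vector_derivative vd (tang \<alpha>) t) (at t within {0..1})"
    and "vd (tang \<alpha>) t = (1 / norm (vd \<alpha> t)) *\<^sub>R vd (vd \<alpha>) t + c *\<^sub>R vd \<alpha> t"
proof -
  have tang: "tang \<alpha> = (\<lambda>u. (1 / norm (vd \<alpha> u)) *\<^sub>R vd \<alpha> u)"
    by (simp add: fun_eq_iff tang_def)
  obtain c where "((\<lambda>u. (1 / norm (vd \<alpha> u)) *\<^sub>R vd \<alpha> u) has_vector_derivative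
      (1 / norm (vd \<alpha> t)) *\<^sub>R vd (vd \<alpha>) t + c *\<^sub>R vd \<alpha> t) (at t within {0..1})"
    by (rule has_vector_derivative_normalized[OF has_vector_derivative_vd[OF assms(2)] assms(3)])
  then have D: "(tang \<alpha> has_vector_derivative
      (1 / norm (vd \<alpha> t)) *\<^sub>R vd (vd \<alpha>) t + c *\<^sub>R vd \<alpha> t) (at t within {0..1})"
    by (simp only: tang)
  show ?thesis
    using that[of c] D vd_eqI[OF assms(1) D] by simp
qed

lemma has_vector_derivative_tang:
  assumes "t \<in> {0..1}" "vd \<alpha> differentiable (at t within {0..1})" "vd \<alpha> t \<noteq> 0"
  shows "(tang \<alpha> has_vector_derivative vd (tang \<alpha>) t) (at t within {0..1})"
  using vd_tang[OF assms] by blast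

lemma inner_tang_vd_tang:
  assumes "\<forall>u\<in>{0..1}. vd \<alpha> u \<noteq> 0" "t \<in> {0..1}" "vd \<alpha> differentiable (at t within {0..1})"
  shows "tang \<alpha> t \<bullet> vd (tang \<alpha>) t = 0"
proof -
  from has_vector_derivative_tang[OF assms(2,3) bspec[OF assms(1,2)]]
  show ?thesis
    by (rule unit_curve_derivative_orthogonal[of 0 1 t "tang \<alpha>", rotated -1])
      (use assms norm_tang in auto)
qed

lemma inner_tang_inner_normal:
  assumes "\<forall>u\<in>{0..1}. vd \<alpha> u \<noteq> 0" "t \<in> {0..1}" "vd \<alpha> differentiable (at t within {0..1})"
  shows "tang \<alpha> t \<bullet> inner_normal \<alpha> t = 0"
  using inner_tang_vd_tang[OF assms] by (simp add: inner_normal_def)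

lemma vd_nonzero_if_counterclockwise:
  assumes "interior K \<noteq> {}" "counterclockwise_at K \<alpha> t"
  shows "vd \<alpha> t \<noteq> 0"
  using assms by (auto simp: counterclockwise_at_def pos_basis_iff_cross2 cross2_def)

lemma left_of_tangent_if_counterclockwise:
  assumes "convex K" "interior K \<noteq> {}" "counterclockwise_at K \<alpha> t" "x \<in> closure K"
  shows "0 \<le> cross2 (vd \<alpha> t) (x - \<alpha> t)"
proof -
  have "closure (interior K) \<subseteq> {y. 0 \<le> cross2 (vd \<alpha> t) (y - \<alpha> t)}"
  proof (rule closure_minimal)
    show "interior K \<subseteq> {y. 0 \<le> cross2 (vd \<alpha> t) (y - \<alpha> t)}"
      using assms(3) by (auto simp: counterclockwise_at_def pos_basis_iff_cross2 less_imp_le)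
    show "closed {y. 0 \<le> cross2 (vd \<alpha> t) (y - \<alpha> t)}"
      unfolding cross2_def by (intro closed_Collect_le continuous_intros)
  qed
  then show ?thesis
    using assms(4) convex_closure_interior[OF assms(1,2)] by auto
qed

lemma inner_normal_eq_rot90_tang:
  assumes "convex K" "interior K \<noteq> {}"
    and "\<forall>t\<in>{0..1}. \<alpha> t \<in> frontier K"
    and "\<forall>t\<in>{0..1}. \<alpha> differentiable (at t within {0..1})"
    and "\<forall>t\<in>{0..1}. vd \<alpha> differentiable (at t within {0..1})"
    and ccw: "\<forall>t\<in>{0..1}. counterclockwise_at K \<alpha> t"
    and t: "t \<in> {0..1}" and "vd (tang \<alpha>) t \<noteq> 0"
  shows "inner_normal \<alpha> t = rot90 (tang \<alpha> t)"
proof -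
  have nz: "vd \<alpha> u \<noteq> 0" if "u \<in> {0..1}" for u
    using vd_nonzero_if_counterclockwise assms(2) ccw that by blast
  obtain c where "(tang \<alpha> has_vector_derivative vd (tang \<alpha>) t) (at t within {0..1})"
    and "vd (tang \<alpha>) t = (1 / norm (vd \<alpha> t)) *\<^sub>R vd (vd \<alpha>) t + c *\<^sub>R vd \<alpha> t"
    by (rule vd_tang[OF t bspec[OF assms(5) t] nz[OF t]])
  then have cross_T: "cross2 (tang \<alpha> t) (vd (tang \<alpha>) t) =
      cross2 (vd \<alpha> t) (vd (vd \<alpha>) t) / (norm (vd \<alpha> t))\<^sup>2"
    by (simp add: tang_def bounded_bilinear.add_right[OF bounded_bilinear_cross2] power2_eq_square)
  have "0 \<le> cross2 (vd \<alpha> t) (vd (vd \<alpha>) t)"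
  proof (rule cross2_velocity_acceleration_nonneg[of 0 1])
    show "(\<alpha> has_vector_derivative vd \<alpha> v) (at v within {0..1})" if "v \<in> {0..1}" for v
      using assms(4) that by (simp add: has_vector_derivative_vd)
    show "(vd \<alpha> has_vector_derivative vd (vd \<alpha>) t) (at t within {0..1})"
      using assms(5) t by (simp add: has_vector_derivative_vd)
    show "0 \<le> cross2 (vd \<alpha> t) (\<alpha> v - \<alpha> t)" if "v \<in> {0..1}" for v
    proof (rule left_of_tangent_if_counterclockwise[OF assms(1,2) bspec[OF ccw t]])
      show "\<alpha> v \<in> closure K"
        using bspec[OF assms(3) that] by (simp add: frontier_def)
    qed
  qed (use t in auto)
  then have "0 \<le> cross2 (tang \<alpha> t) (vd (tang \<alpha>) t)"
    by (simp add: cross_T)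
  moreover have "tang \<alpha> t \<bullet> vd (tang \<alpha>) t = 0"
    using nz t assms(5) by (intro inner_tang_vd_tang) auto
  ultimately show ?thesis
    using normalized_eq_rot90[OF norm_tang[OF nz[OF t]]] assms(8) by (simp add: inner_normal_def)
qed

lemma inner_tang_vd_normal_offset:
  assumes nz: "\<forall>u\<in>{0..1}. vd \<alpha> u \<noteq> 0"
    and "\<forall>u\<in>{0..1}. vd \<alpha> differentiable (at u within {0..1})"
    and "\<alpha> differentiable (at t within {0..1})" "\<beta> differentiable (at t within {0..1})"
    and "\<forall>u\<in>{0..1}. \<beta> u \<in> normal_line \<alpha> u"
    and t: "t \<in> {0..1}" and \<beta>: "\<beta> t = \<alpha> t + s *\<^sub>R inner_normal \<alpha> t"
  shows "vd \<beta> t \<bullet> tang \<alpha> t = norm (vd \<alpha> t) * (1 - s * curvature \<alpha> t)"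
proof -
  have "(\<beta> u - \<alpha> u) \<bullet> tang \<alpha> u = 0" if u: "u \<in> {0..1}" for u
  proof -
    obtain s' where "\<beta> u = \<alpha> u + s' *\<^sub>R inner_normal \<alpha> u"
      using bspec[OF assms(5) u] by (auto simp: normal_line_def)
    then show ?thesis
      using inner_tang_inner_normal[OF nz u] assms(2) u by (simp add: inner_commute)
  qed
  moreover have "(tang \<alpha> has_vector_derivative vd (tang \<alpha>) t) (at t within {0..1})"
    by (rule has_vector_derivative_tang[OF t bspec[OF assms(2) t] bspec[OF nz t]])
  moreover have "((\<lambda>u. \<beta> u - \<alpha> u) has_vector_derivative vd \<beta> t - vd \<alpha> t) (at t within {0..1})"
    using assms(3,4) by (intro has_vector_derivative_diff has_vector_derivative_vd)
  ultimately have "(vd \<beta> t - vd \<alpha> t) \<bullet> tang \<alpha> t = - ((\<beta> t - \<alpha> t) \<bullet> vd (tang \<alpha>) t)"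
    using derivative_of_orthogonality[of 0 1 t "\<lambda>u. \<beta> u - \<alpha> u" "tang \<alpha>"] t by simp
  moreover have "(\<beta> t - \<alpha> t) \<bullet> vd (tang \<alpha>) t = s * norm (vd (tang \<alpha>) t)"
    by (simp add: \<beta> inner_normal_def dot_square_norm power2_eq_square)
  moreover have "vd \<alpha> t \<bullet> tang \<alpha> t = norm (vd \<alpha> t)"
    using nz t by (simp add: tang_def dot_square_norm power2_eq_square)
  ultimately show ?thesis
    using nz t by (simp add: curvature_def algebra_simps)
qed

theorem lemmaD3:
  fixes K C :: "(real^2) set" and \<alpha> \<beta> :: "real \<Rightarrow> real^2"
  assumes "compact K" and "convex K" and "interior K \<noteq> {}"
    and "C = frontier K"
    and "\<forall>t\<in>{0..1}. \<alpha> t \<in> C"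
    and "\<forall>t\<in>{0..1}. \<alpha> differentiable (at t within {0..1})"
    and "\<forall>t\<in>{0..1}. vd \<alpha> differentiable (at t within {0..1})"
    and "\<forall>t\<in>{0..1}. vd (vd \<alpha>) differentiable (at t within {0..1})"
    and "\<forall>t\<in>{0..1}. counterclockwise_at K \<alpha> t"
    and "\<forall>t\<in>{0..1}. vd (tang \<alpha>) t \<noteq> 0"
    and "\<forall>t\<in>{0..1}. \<beta> differentiable (at t within {0..1})"
    and "\<forall>t\<in>{0..1}. \<beta> t \<in> normal_line \<alpha> t - {curv_center \<alpha> t}"
  shows "\<forall>t\<in>{0..1}. pos_basis (vd \<beta> t) (inner_normal \<alpha> t) \<longleftrightarrow>
           \<beta> t \<in> connected_component_set (normal_line \<alpha> t - {curv_center \<alpha> t}) (\<alpha> t)"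
proof (intro ballI)
  fix t :: real
  assume t: "t \<in> {0..1}"
  define N \<kappa> where "N = inner_normal \<alpha> t" and "\<kappa> = curvature \<alpha> t"
  have nz: "\<forall>u\<in>{0..1}. vd \<alpha> u \<noteq> 0"
    using vd_nonzero_if_counterclockwise assms(3,9) by blast
  have N: "N = rot90 (tang \<alpha> t)"
    unfolding N_def using assms(2,3,5-7,9,10) t
    by (intro inner_normal_eq_rot90_tang[of K]) (auto simp: assms(4))
  have "norm N = 1"
    using nz t by (simp add: N norm_tang)
  then have "N \<noteq> 0"
    by auto
  have "0 < \<kappa>"
    using nz t assms(10) by (simp add: \<kappa>_def curvature_def)
  obtain s where \<beta>: "\<beta> t = \<alpha> t + s *\<^sub>R N"
    using bspec[OF assms(12) t] by (auto simp: normal_line_def N_def)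
  have "vd \<beta> t \<bullet> tang \<alpha> t = norm (vd \<alpha> t) * (1 - s * \<kappa>)"
    unfolding \<kappa>_def using assms(6,7,11,12) t \<beta>
    by (intro inner_tang_vd_normal_offset[OF nz]) (auto simp: N_def)
  then have "pos_basis (vd \<beta> t) N \<longleftrightarrow> 0 < norm (vd \<alpha> t) * (1 - s * \<kappa>)"
    by (simp add: pos_basis_iff_cross2 N cross2_rot90)
  also have "\<dots> \<longleftrightarrow> s < 1 / \<kappa>"
    using nz t \<open>0 < \<kappa>\<close> by (simp add: zero_less_mult_iff field_simps)
  also have "\<dots> \<longleftrightarrow> \<beta> t \<in> connected_component_set (normal_line \<alpha> t - {curv_center \<alpha> t}) (\<alpha> t)"
    using connected_component_line_minus_point[OF \<open>N \<noteq> 0\<close>, of 0 "1 / \<kappa>" "\<alpha> t" s] \<open>0 < \<kappa>\<close>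
    by (simp add: normal_line_def curv_center_def \<beta> flip: N_def \<kappa>_def)
  finally show "pos_basis (vd \<beta> t) (inner_normal \<alpha> t) \<longleftrightarrow>
      \<beta> t \<in> connected_component_set (normal_line \<alpha> t - {curv_center \<alpha> t}) (\<alpha> t)"
    by (simp add: N_def)
qed

end
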